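(* Let $n \geq 2$, $R > 0$, and let $m$ be a uniform (rotation-invariant) measure on $S^{n-1}_R = \{x\in\mathbb{R}^n : \|x\|=R\}$, normalized or not. Let $\Psi:\mathbb{R}\to\mathbb{R}$ be convex and uniformly continuous, let $f:S^{n-1}_R\to[0,1]$ be integrable, and let $K:\mathbb{R}\to\mathbb{R}$ be non-decreasing, bounded and measurable. For $g: S^{n-1}_R \to \mathbb{R}$ write $Kg(x) = \int_{S^{n-1}_R} K(\langle x,y\rangle) g(y)\,dm(y)$. Then for every hyperplane $\sigma$ through the origin that does not contain $r = (R,0,\ldots,0)$, \[ \int_{S^{n-1}_R} \Psi(Kf(x))\,dm(x) \leq \int_{S^{n-1}_R} \Psi(Kf^{\sigma}(x))\,dm(x). \]
   Context: For a hyperplane $\sigma$ through the origin not containing $r$, let $v$ be the unit normal vector of $\sigma$ with $\langle v, r\rangle > 0$; let $H^+_\sigma = \{x \in S^{n-1}_R : \langle x,v\rangle \geq 0\}$ (the hemisphere containing $r$) and $H^-_\sigma = \{x\in S^{n-1}_R : \langle x, v\rangle < 0\}$. For $x \in S^{n-1}_R$, $\sigma x$ denotes the reflection of $x$ across $\sigma$. The polarization of $f$ with respect to $\sigma$ is $f^\sigma(x) = \max\{f(x), f(\sigma x)\}$ if $x \in H^+_\sigma$ and $f^\sigma(x) = \min\{f(x), f(\sigma x)\}$ if $x\in H^-_\sigma$. *)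

theory Defs
  imports "HOL-Analysis.Analysis"
begin

definition hp_reflect :: "real^'n \<Rightarrow> real^'n \<Rightarrow> real^'n" where
  "hp_reflect v x = x - (2 * (x \<bullet> v)) *\<^sub>R v"

text \<open>Polarization of f with respect to the hyperplane with unit normal v
  (v oriented so that the closed half-space x \<bullet> v \<ge> 0 contains r).\<close>
definition polarization :: "real^'n \<Rightarrow> (real^'n \<Rightarrow> real) \<Rightarrow> real^'n \<Rightarrow> real" where
  "polarization v f x =
     (if x \<bullet> v \<ge> 0 then max (f x) (f (hp_reflect v x)) else min (f x) (f (hp_reflect v x)))"

definition Kop :: "(real^'n) measure \<Rightarrow> (real \<Rightarrow> real) \<Rightarrow> (real^'n \<Rightarrow> real) \<Rightarrow> real^'n \<Rightarrow> real" where
  "Kop m K g x = (\<integral>y. K (x \<bullet> y) * g y \<partial>m)"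

definition uniform_sphere_measure :: "real \<Rightarrow> (real^'n) measure \<Rightarrow> bool" where
  "uniform_sphere_measure R m \<longleftrightarrow>
     sets m = sets borel \<and> finite_measure m \<and> emeasure m (- sphere 0 R) = 0 \<and>
     (\<forall>T. orthogonal_transformation T \<and> det (matrix T) = 1 \<longrightarrow>
        (\<forall>A \<in> sets m. emeasure m (T -` A) = emeasure m A))"

end

theory Submission
  imports Defs
begin

text \<open>Write \<open>\<sigma>\<close> for the reflection. The measure \<open>m\<close> is invariant under \<open>\<sigma>\<close>, although only
  rotation invariance is assumed: in the plane of the normal \<open>v\<close> and an orthogonal unit vector
  \<open>w\<close>, \<open>\<sigma>\<close> maps every orbit of the rotations of that plane onto itself like a rotation
  composed with an inversion of the angle, so averaging over these rotations gives
  \<open>\<integral> g \<circ> \<sigma> dm = \<integral> g dm\<close>. Consequently every integral over \<open>m\<close> can be computed by pairing \<open>y\<close>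
  with \<open>\<sigma> y\<close>, with \<open>y\<close> in the closed half-space \<open>H\<^sup>+\<close>.

  Fix \<open>x \<in> H\<^sup>+\<close>. For \<open>y \<in> H\<^sup>+\<close> monotonicity of \<open>K\<close> gives \<open>K \<langle>x, \<sigma> y\<rangle> \<le> K \<langle>x, y\<rangle>\<close>, and \<open>f\<^sup>\<sigma>\<close>
  puts the larger of \<open>f y\<close>, \<open>f (\<sigma> y)\<close> at \<open>y\<close>; a two-point rearrangement inequality then shows
  that \<open>Kf\<^sup>\<sigma> x\<close> dominates both \<open>Kf x\<close> and \<open>Kf (\<sigma> x)\<close>, while
  \<open>Kf\<^sup>\<sigma> x + Kf\<^sup>\<sigma> (\<sigma> x) = Kf x + Kf (\<sigma> x)\<close>. By convexity of \<open>\<Psi>\<close>, spreading a pair apart with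
  fixed sum increases \<open>\<Psi> a + \<Psi> b\<close>, and pairing \<open>x\<close> with \<open>\<sigma> x\<close> once more gives the theorem.\<close>

lemma hp_reflect_inner_normal: "v \<bullet> v = 1 \<Longrightarrow> hp_reflect v x \<bullet> v = - (x \<bullet> v)"
  by (simp add: hp_reflect_def inner_diff_left)

lemma hp_reflect_hp_reflect: "v \<bullet> v = 1 \<Longrightarrow> hp_reflect v (hp_reflect v x) = x"
  by (simp add: hp_reflect_def inner_diff_left algebra_simps)

lemma hp_reflect_inner: "v \<bullet> v = 1 \<Longrightarrow> hp_reflect v x \<bullet> hp_reflect v y = x \<bullet> y"
  by (simp add: hp_reflect_def inner_diff_left inner_diff_right inner_commute algebra_simps)

lemma hp_reflect_fixpoint: "x \<bullet> v = 0 \<Longrightarrow> hp_reflect v x = x"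
  by (simp add: hp_reflect_def)

lemma borel_measurable_hp_reflect [measurable]: "hp_reflect v \<in> borel_measurable borel"
  unfolding hp_reflect_def by (intro borel_measurable_continuous_onI continuous_intros)

definition plane_rotation :: "real^'n \<Rightarrow> real^'n \<Rightarrow> real \<Rightarrow> real^'n \<Rightarrow> real^'n" where
  "plane_rotation v w t x = x + ((cos t - 1) * (x \<bullet> v) - sin t * (x \<bullet> w)) *\<^sub>R v
                              + ((cos t - 1) * (x \<bullet> w) + sin t * (x \<bullet> v)) *\<^sub>R w"

locale orthonormal_pair =
  fixes v w :: "real^'n"
  assumes v_unit: "v \<bullet> v = 1" and w_unit: "w \<bullet> w = 1" and orthogonal_vw: "v \<bullet> w = 0"
begin

abbreviation rot :: "real \<Rightarrow> real^'n \<Rightarrow> real^'n" where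
  "rot \<equiv> plane_rotation v w"

lemma rot_inner_v: "rot t x \<bullet> v = cos t * (x \<bullet> v) - sin t * (x \<bullet> w)"
  using orthogonal_vw by (simp add: plane_rotation_def inner_add_left v_unit inner_commute algebra_simps)

lemma rot_inner_w: "rot t x \<bullet> w = cos t * (x \<bullet> w) + sin t * (x \<bullet> v)"
  using orthogonal_vw by (simp add: plane_rotation_def inner_add_left w_unit algebra_simps)

lemma rot_add: "rot s (rot t x) = rot (s + t) x"
proof -
  have "rot s (rot t x) = x
      + ((cos t - 1) * (x \<bullet> v) - sin t * (x \<bullet> w)
         + ((cos s - 1) * (cos t * (x \<bullet> v) - sin t * (x \<bullet> w)) - sin s * (cos t * (x \<bullet> w) + sin t * (x \<bullet> v)))) *\<^sub>R v
      + ((cos t - 1) * (x \<bullet> w) + sin t * (x \<bullet> v)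
         + ((cos s - 1) * (cos t * (x \<bullet> w) + sin t * (x \<bullet> v)) + sin s * (cos t * (x \<bullet> v) - sin t * (x \<bullet> w)))) *\<^sub>R w"
    unfolding plane_rotation_def[of v w s "rot t x"] rot_inner_v rot_inner_w
    by (simp add: plane_rotation_def scaleR_add_left)
  also have "\<dots> = rot (s + t) x"
    unfolding plane_rotation_def by (simp add: cos_add sin_add algebra_simps)
  finally show ?thesis .
qed

lemma rot_periodic: "rot (t + 2 * pi) = rot t"
  by (simp add: plane_rotation_def fun_eq_iff)

lemma linear_rot: "linear (rot t)"
  by (rule linearI) (simp_all add: plane_rotation_def inner_add_left algebra_simps scaleR_add_left)

lemma rot_inner: "rot t x \<bullet> rot t y = x \<bullet> y"
  using orthogonal_vw
  by (simp add: plane_rotation_def inner_add_left inner_add_right v_unit w_unit inner_commute)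
     (use sin_cos_squared_add[of t] in algebra)

lemma orthogonal_transformation_rot: "orthogonal_transformation (rot t)"
  unfolding orthogonal_transformation_def using linear_rot rot_inner by blast

text \<open>A rotation is the square of the rotation by half the angle, so its determinant is a square
  of \<open>\<plusminus>1\<close>.\<close>
lemma det_rot: "det (matrix (rot t)) = 1"
proof -
  have "rot t = rot (t/2) \<circ> rot (t/2)"
    by (simp add: fun_eq_iff rot_add)
  then have "det (matrix (rot t)) = det (matrix (rot (t/2))) ^ 2"
    by (simp add: matrix_compose linear_rot det_mul power2_eq_square)
  moreover have "\<bar>det (matrix (rot (t/2)))\<bar> = 1"
    using det_orthogonal_matrix orthogonal_transformation_matrix orthogonal_transformation_rot
    by fastforce
  ultimately show ?thesis
    by (metis abs_minus_cancel abs_one abs_power2 power2_abs power_one)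
qed

lemma borel_measurable_rot [measurable]:
  "(\<lambda>p. rot (fst p) (snd p)) \<in> borel_measurable borel" "rot t \<in> borel_measurable borel"
  "(\<lambda>t. rot t x) \<in> borel_measurable borel"
  unfolding plane_rotation_def
  by (intro borel_measurable_continuous_onI continuous_intros)+

lemma hp_reflect_rot: "hp_reflect v (rot t x) = rot (- t) (hp_reflect v x)"
  using orthogonal_vw
  by (simp add: vec_eq_iff hp_reflect_def plane_rotation_def rot_inner_v inner_diff_left
      inner_commute v_unit algebra_simps)

text \<open>In the plane of \<open>v\<close> and \<open>w\<close> the reflection maps the point of angle \<open>q\<close> to the point of
  angle \<open>\<pi> - q\<close>, i.e.\ it acts on each orbit as the rotation by \<open>\<pi> - 2q\<close>; the cosine and sine
  of that angle are written rationally in the coordinates \<open>a = r cos q\<close>, \<open>b = r sin q\<close>.\<close>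
lemma hp_reflect_in_rot_orbit: "\<exists>p. 0 \<le> p \<and> p < 2 * pi \<and> hp_reflect v x = rot p x"
proof -
  define a where "a = x \<bullet> v"
  define b where "b = x \<bullet> w"
  obtain p where p: "0 \<le> p" "p < 2 * pi" and "a * cos p - b * sin p = - a" "b * cos p + a * sin p = b"
  proof (cases "a\<^sup>2 + b\<^sup>2 = 0")
    case True
    then show ?thesis by (intro that[of 0]) (auto simp: sum_power2_eq_zero_iff)
  next
    case False
    define r where "r = a\<^sup>2 + b\<^sup>2"
    have "((b\<^sup>2 - a\<^sup>2) / r)\<^sup>2 + (2 * a * b / r)\<^sup>2 = 1"
      using False unfolding r_def by (simp add: field_simps) algebra
    then obtain p where "0 \<le> p" "p < 2 * pi" "(b\<^sup>2 - a\<^sup>2) / r = cos p" "2 * a * b / r = sin p"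
      by (rule sincos_total_2pi)
    moreover have "a * ((b\<^sup>2 - a\<^sup>2) / r) - b * (2 * a * b / r) = - a"
      "b * ((b\<^sup>2 - a\<^sup>2) / r) + a * (2 * a * b / r) = b"
      using False by (simp_all add: r_def divide_simps) (simp_all add: power2_eq_square algebra_simps)
    ultimately show ?thesis
      by (intro that[of p]) auto
  qed
  then have "(cos p - 1) * a - sin p * b = - 2 * a" "(cos p - 1) * b + sin p * a = 0"
    by (simp_all add: algebra_simps)
  with p show ?thesis
    by (intro exI[of _ p]) (simp add: plane_rotation_def hp_reflect_def a_def b_def)
qed

end

lemma integrable_indicator_times_bounded:
  fixes h :: "real \<Rightarrow> real"
  assumes [measurable]: "h \<in> borel_measurable borel" and "\<And>t. \<bar>h t\<bar> \<le> B"
  shows "integrable lborel (\<lambda>t. indicator {a..<b} t * h t)"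
proof (rule Bochner_Integration.integrable_bound)
  show "integrable lborel (\<lambda>t. indicator {a..<b} t * B)"
    by (intro integrable_mult_left) (cases "a \<le> b"; simp add: integrable_indicator_iff)
  show "AE t in lborel. norm (indicator {a..<b} t * h t) \<le> norm (indicator {a..<b} t * B)"
    using assms(2) by (intro AE_I2) (auto simp: indicator_def intro: order_trans[OF _ abs_ge_self])
qed measurable

lemma integral_periodic_shift:
  fixes h :: "real \<Rightarrow> real"
  assumes [measurable]: "h \<in> borel_measurable borel" and bounded: "\<And>t. \<bar>h t\<bar> \<le> B"
    and periodic: "\<And>t. h (t + 2 * pi) = h t" and "0 \<le> p" "p \<le> 2 * pi"
  shows "(\<integral>t. indicator {0..<2*pi} t * h (t + p) \<partial>lborel) = (\<integral>t. indicator {0..<2*pi} t * h t \<partial>lborel)"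
proof -
  note integrable = integrable_indicator_times_bounded[OF assms(1) bounded]
  have shift: "(\<integral>t. f t \<partial>lborel) = (\<integral>t. f (c + t) \<partial>lborel)" for f :: "real \<Rightarrow> real" and c
    using lborel_integral_real_affine[where c=1 and t=c and f=f] by simp
  have split: "(\<integral>t. indicator {a..<c} t * h t \<partial>lborel) =
      (\<integral>t. indicator {a..<b} t * h t \<partial>lborel) + (\<integral>t. indicator {b..<c} t * h t \<partial>lborel)"
    if "a \<le> b" "b \<le> c" for a b c
    using that
    by (subst Bochner_Integration.integral_add[symmetric, OF integrable integrable])
       (auto intro!: Bochner_Integration.integral_cong simp: indicator_def)
  have "(\<integral>t. indicator {0..<2*pi} t * h (t + p) \<partial>lborel) = (\<integral>t. indicator {p..<p+2*pi} t * h t \<partial>lborel)"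
    using shift[of "\<lambda>t. indicator {p..<p+2*pi} t * h t" p] by (simp add: indicator_def add.commute)
  also have "\<dots> = (\<integral>t. indicator {p..<2*pi} t * h t \<partial>lborel) + (\<integral>t. indicator {2*pi..<p+2*pi} t * h t \<partial>lborel)"
    using assms(4,5) by (intro split) auto
  also have "(\<integral>t. indicator {2*pi..<p+2*pi} t * h t \<partial>lborel) = (\<integral>t. indicator {0..<p} t * h t \<partial>lborel)"
    using shift[of "\<lambda>t. indicator {2*pi..<p+2*pi} t * h t" "2*pi"]
    by (simp add: indicator_def periodic[unfolded add.commute[of _ "2*pi"]])
  also have "(\<integral>t. indicator {p..<2*pi} t * h t \<partial>lborel) + \<dots> = (\<integral>t. indicator {0..<2*pi} t * h t \<partial>lborel)"
    using assms(4,5) split[of 0 p "2*pi"] by simp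
  finally show ?thesis .
qed

lemma integral_periodic_reflect:
  fixes h :: "real \<Rightarrow> real"
  assumes [measurable]: "h \<in> borel_measurable borel" and periodic: "\<And>t. h (t + 2 * pi) = h t"
  shows "(\<integral>t. indicator {0..<2*pi} t * h (- t) \<partial>lborel) = (\<integral>t. indicator {0..<2*pi} t * h t \<partial>lborel)"
proof -
  have "(\<integral>t. indicator {0..<2*pi} t * h t \<partial>lborel) =
      (\<integral>t. indicator {0..<2*pi} (2*pi - t) * h (2*pi - t) \<partial>lborel)"
    using lborel_integral_real_affine[where c="-1" and t="2*pi" and f="\<lambda>t. indicator {0..<2*pi} t * h t"]
    by simp
  also have "\<dots> = (\<integral>t. indicator {0..<2*pi} t * h (- t) \<partial>lborel)"
  proof (rule integral_cong_AE)
    show "AE t in lborel. indicator {0..<2*pi} (2*pi - t) * h (2*pi - t) = indicator {0..<2*pi} t * h (- t)"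
      using AE_lborel_singleton[of 0] AE_lborel_singleton[of "2*pi"]
    proof eventually_elim
      case (elim t)
      then show ?case
        using periodic[of "- t"] by (auto simp: indicator_def)
    qed
  qed measurable
  finally show ?thesis ..
qed

lemma distr_self_eqI:
  assumes sets_eq: "sets m = sets borel" and [measurable]: "T \<in> borel_measurable borel"
    and invariant: "\<And>A. A \<in> sets borel \<Longrightarrow> emeasure m (T -` A) = emeasure m A"
  shows "distr m m T = m"
proof (rule measure_eqI)
  have "space m = UNIV" using sets_eq_imp_space_eq[OF sets_eq] by simp
  moreover have "T \<in> measurable m m" using measurable_cong_sets[OF sets_eq sets_eq] by simp
  ultimately show "emeasure (distr m m T) A = emeasure m A" if "A \<in> sets (distr m m T)" for A
    using that sets_eq invariant by (simp add: emeasure_distr)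
qed simp

context orthonormal_pair
begin

lemma integral_rot_average:
  fixes m :: "(real^'n) measure" and g :: "real^'n \<Rightarrow> real"
  assumes sets_eq: "sets m = sets borel" and "finite_measure m"
    and rot_invariant: "\<And>t. distr m m (rot t) = m"
    and g_measurable [measurable]: "g \<in> borel_measurable borel" and bounded: "\<And>x. \<bar>g x\<bar> \<le> B"
  shows "(\<integral>x. (\<integral>t. indicator {0..<2*pi} t * g (rot t x) \<partial>lborel) \<partial>m) = 2 * pi * (\<integral>x. g x \<partial>m)"
proof -
  define I where "I = density lborel (\<lambda>t. ennreal (indicator {0..<2*pi} t))"
  have integral_I: "(\<integral>t. g (rot t x) \<partial>I) = (\<integral>t. indicator {0..<2*pi} t * g (rot t x) \<partial>lborel)" for x
    unfolding I_def by (subst integral_density) auto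
  have emeasure_I: "emeasure I UNIV = 2 * pi"
    unfolding I_def by (simp add: emeasure_density ennreal_indicator)
  have space_I: "space I = UNIV"
    by (simp add: I_def)
  interpret I: finite_measure I
    by (rule finite_measureI) (simp add: space_I emeasure_I)
  interpret m: finite_measure m by fact
  interpret pair_sigma_finite I m ..
  have sets_prod: "sets (I \<Otimes>\<^sub>M m) = sets (borel \<Otimes>\<^sub>M borel)"
    unfolding I_def by (intro sets_pair_measure_cong sets_eq) simp
  have "(\<lambda>(t, x). g (rot t x)) \<in> borel_measurable (borel \<Otimes>\<^sub>M borel)"
    unfolding borel_prod by measurable
  then have "(\<lambda>(t, x). g (rot t x)) \<in> borel_measurable (I \<Otimes>\<^sub>M m)"
    by (simp add: measurable_cong_sets[OF sets_prod refl])
  then have "integrable (I \<Otimes>\<^sub>M m) (\<lambda>(t, x). g (rot t x))"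
    using bounded I.finite_measure_axioms m.finite_measure_axioms
    by (intro finite_measure.integrable_const_bound[where B=B] finite_measure_pair_measure) auto
  then have "(\<integral>x. (\<integral>t. g (rot t x) \<partial>I) \<partial>m) = (\<integral>t. (\<integral>x. g (rot t x) \<partial>m) \<partial>I)"
    by (rule Fubini_integral)
  also have "\<dots> = (\<integral>t. (\<integral>x. g x \<partial>m) \<partial>I)"
  proof -
    have "rot t \<in> measurable m m" for t
      using measurable_cong_sets[OF sets_eq sets_eq] by simp
    moreover have "g \<in> borel_measurable m"
      by (subst measurable_cong_sets[OF sets_eq refl]) (rule g_measurable)
    ultimately show ?thesis
      using integral_distr[of "rot _" m m g] by (simp add: rot_invariant)
  qed
  finally show ?thesis
    by (simp add: integral_I measure_def space_I emeasure_I)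
qed

text \<open>On each orbit of the rotations the reflection acts as a rotation composed with the
  inversion \<open>t \<mapsto> -t\<close> of the angle, and both preserve the integral over a period.\<close>
lemma integral_rot_orbit_hp_reflect:
  fixes g :: "real^'n \<Rightarrow> real"
  assumes [measurable]: "g \<in> borel_measurable borel" and bounded: "\<And>x. \<bar>g x\<bar> \<le> B"
  shows "(\<integral>t. indicator {0..<2*pi} t * g (hp_reflect v (rot t x)) \<partial>lborel) =
    (\<integral>t. indicator {0..<2*pi} t * g (rot t x) \<partial>lborel)"
proof -
  obtain p where p: "0 \<le> p" "p \<le> 2 * pi" "hp_reflect v x = rot p x"
    using hp_reflect_in_rot_orbit by (auto intro: less_imp_le)
  have periodic: "g (rot (t + 2 * pi) y) = g (rot t y)" for t y
    by (simp add: rot_periodic)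
  have "(\<integral>t. indicator {0..<2*pi} t * g (hp_reflect v (rot t x)) \<partial>lborel) =
        (\<integral>t. indicator {0..<2*pi} t * g (rot (- t) (hp_reflect v x)) \<partial>lborel)"
    by (simp add: hp_reflect_rot)
  also have "\<dots> = (\<integral>t. indicator {0..<2*pi} t * g (rot t (hp_reflect v x)) \<partial>lborel)"
    by (rule integral_periodic_reflect) (simp_all add: periodic)
  also have "\<dots> = (\<integral>t. indicator {0..<2*pi} t * g (rot (t + p) x) \<partial>lborel)"
    by (simp add: p(3) rot_add)
  also have "\<dots> = (\<integral>t. indicator {0..<2*pi} t * g (rot t x) \<partial>lborel)"
    by (rule integral_periodic_shift[where B=B]) (simp_all add: bounded periodic p)
  finally show ?thesis .
qed

lemma integral_hp_reflect_of_rot_invariant: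
  fixes m :: "(real^'n) measure" and g :: "real^'n \<Rightarrow> real"
  assumes "sets m = sets borel" and "finite_measure m" and "\<And>t. distr m m (rot t) = m"
    and [measurable]: "g \<in> borel_measurable borel" and bounded: "\<And>x. \<bar>g x\<bar> \<le> B"
  shows "(\<integral>x. g (hp_reflect v x) \<partial>m) = (\<integral>x. g x \<partial>m)"
  using integral_rot_average[OF assms(1-3), of g B]
    integral_rot_average[OF assms(1-3), of "\<lambda>x. g (hp_reflect v x)" B]
  by (simp add: bounded integral_rot_orbit_hp_reflect[where B=B])

lemma distr_hp_reflect_eq_of_rot_invariant:
  fixes m :: "(real^'n) measure"
  assumes sets_eq: "sets m = sets borel" and finite: "finite_measure m"
    and rot_invariant: "\<And>t. distr m m (rot t) = m"
  shows "distr m m (hp_reflect v) = m"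
proof (rule distr_self_eqI[OF sets_eq])
  interpret m: finite_measure m by fact
  fix A :: "(real^'n) set"
  assume A: "A \<in> sets borel"
  then have "(\<integral>x. indicator A (hp_reflect v x) \<partial>m) = (\<integral>x. indicator A x \<partial>m :: real)"
    by (intro integral_hp_reflect_of_rot_invariant[OF sets_eq finite rot_invariant, where B=1])
       (auto simp: indicator_def)
  moreover have "space m = UNIV" using sets_eq_imp_space_eq[OF sets_eq] by simp
  ultimately show "emeasure m (hp_reflect v -` A) = emeasure m A"
    using A sets_eq measurable_sets[OF borel_measurable_hp_reflect A]
    by (simp add: m.emeasure_eq_measure indicator_vimage[symmetric] comp_def)
qed simp

end

lemma uniform_sphere_measure_hp_reflect_invariant:
  fixes m :: "(real^'n) measure" and v :: "real^'n"
  assumes "CARD('n) \<ge> 2" and uniform: "uniform_sphere_measure R m" and "v \<bullet> v = 1"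
  shows "distr m m (hp_reflect v) = m"
proof -
  obtain y :: "real^'n" where y: "y \<noteq> 0" "orthogonal v y"
    using orthogonal_to_vector_exists[of v] assms(1) by auto
  interpret orthonormal_pair v "y /\<^sub>R norm y"
    using assms(3) y by unfold_locales (auto simp: orthogonal_def dot_square_norm power2_eq_square)
  have sets_eq: "sets m = sets borel" and finite: "finite_measure m"
    and rotation_invariant: "\<And>T A. orthogonal_transformation T \<Longrightarrow> det (matrix T) = 1 \<Longrightarrow>
      A \<in> sets m \<Longrightarrow> emeasure m (T -` A) = emeasure m A"
    using uniform unfolding uniform_sphere_measure_def by auto
  have "distr m m (rot t) = m" for t
    using rotation_invariant[OF orthogonal_transformation_rot det_rot] sets_eq
    by (intro distr_self_eqI) auto
  then show ?thesis
    by (rule distr_hp_reflect_eq_of_rot_invariant[OF sets_eq finite])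
qed

lemma hp_reflect_pair_wlog:
  assumes "v \<bullet> v = 1" and "\<And>y. 0 \<le> y \<bullet> v \<Longrightarrow> P y (hp_reflect v y)" and "\<And>y z. P y z \<Longrightarrow> P z y"
  shows "P x (hp_reflect v x)"
proof (cases "0 \<le> x \<bullet> v")
  case False
  then have "P (hp_reflect v x) x"
    using assms(2)[of "hp_reflect v x"] by (simp add: hp_reflect_inner_normal hp_reflect_hp_reflect assms(1))
  then show ?thesis by (rule assms(3))
qed (rule assms(2))

lemma polarization_nonneg_side: "0 \<le> x \<bullet> v \<Longrightarrow> polarization v f x = max (f x) (f (hp_reflect v x))"
  by (simp add: polarization_def)

lemma polarization_hp_reflect_nonneg_side:
  assumes "v \<bullet> v = 1" and "0 \<le> x \<bullet> v"
  shows "polarization v f (hp_reflect v x) = min (f x) (f (hp_reflect v x))"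
proof (cases "x \<bullet> v = 0")
  case True
  then show ?thesis by (simp add: polarization_def hp_reflect_fixpoint)
next
  case False
  with assms show ?thesis
    by (simp add: polarization_def hp_reflect_inner_normal hp_reflect_hp_reflect min.commute)
qed

lemma polarization_add_hp_reflect:
  assumes "v \<bullet> v = 1"
  shows "polarization v f x + polarization v f (hp_reflect v x) = f x + f (hp_reflect v x)"
  using assms
  by (rule hp_reflect_pair_wlog[where P="\<lambda>y z. polarization v f y + polarization v f z = f y + f z"])
     (auto simp: polarization_nonneg_side polarization_hp_reflect_nonneg_side assms)

lemma borel_measurable_polarization [measurable]:
  assumes [measurable]: "f \<in> borel_measurable borel"
  shows "polarization v f \<in> borel_measurable borel"
  unfolding polarization_def by measurable

lemma max_min_rearrangement:
  fixes k k' a b :: real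
  assumes "k' \<le> k"
  shows "k * a + k' * b \<le> k * max a b + k' * min a b"
proof (cases "a \<le> b")
  case True
  with assms have "k' * (b - a) \<le> k * (b - a)" by (intro mult_right_mono) auto
  with True show ?thesis by (simp add: algebra_simps)
qed simp

lemma convex_on_spread:
  fixes Psi :: "real \<Rightarrow> real"
  assumes convex: "convex_on UNIV Psi" and "a \<le> a'" "b \<le> a'" and sum: "a' + b' = a + b"
  shows "Psi a + Psi b \<le> Psi a' + Psi b'"
proof (cases "a' = b'")
  case True
  with assms(2-4) have "a = a'" "b = a'" by auto
  with True show ?thesis by simp
next
  case False
  then have "b' < a'" using assms(2-4) by auto
  define t where "t = (a - b') / (a' - b')"
  have "0 \<le> t" "t \<le> 1"
    unfolding t_def using \<open>b' < a'\<close> assms(2-4) by (auto simp: field_simps)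
  have "t * (a' - b') = a - b'"
    unfolding t_def using \<open>b' < a'\<close> by simp
  then have a: "a = (1 - t) * b' + t * a'" and b: "b = (1 - (1 - t)) * b' + (1 - t) * a'"
    using sum by (simp_all add: algebra_simps)
  have "Psi a \<le> (1 - t) * Psi b' + t * Psi a'"
    unfolding a using convex_onD[OF convex, of t b' a'] \<open>0 \<le> t\<close> \<open>t \<le> 1\<close> by simp
  moreover have "Psi b \<le> (1 - (1 - t)) * Psi b' + (1 - t) * Psi a'"
    unfolding b using convex_onD[OF convex, of "1 - t" b' a'] \<open>0 \<le> t\<close> \<open>t \<le> 1\<close> by simp
  ultimately show ?thesis by (simp add: algebra_simps)
qed

locale reflection_invariant_measure = finite_measure m for m :: "(real^'n) measure" +
  fixes v :: "real^'n"
  assumes sets_eq: "sets m = sets borel" and v_unit: "v \<bullet> v = 1"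
    and distr_hp_reflect: "distr m m (hp_reflect v) = m"
begin

lemma measurable_m_eq: "measurable m N = measurable borel N"
  by (rule measurable_cong_sets[OF sets_eq refl])

lemma hp_reflect_measurable_m: "hp_reflect v \<in> measurable m m"
  using measurable_cong_sets[OF sets_eq sets_eq] by simp

lemma integral_hp_reflect:
  "h \<in> borel_measurable borel \<Longrightarrow> (\<integral>x. h (hp_reflect v x) \<partial>m) = (\<integral>x. h x \<partial>m :: real)"
  using integral_distr[OF hp_reflect_measurable_m, of h] distr_hp_reflect by (simp add: measurable_m_eq)

lemma integrable_hp_reflect: "integrable m h \<Longrightarrow> integrable m (\<lambda>x. h (hp_reflect v x) :: real)"
  using integrable_distr_eq[OF hp_reflect_measurable_m, of h] distr_hp_reflect by simp

lemma integral_mono_reflection_pairs: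
  assumes g: "integrable m g" and h: "integrable m h"
    and pairs: "\<And>y. 0 \<le> y \<bullet> v \<Longrightarrow> g y + g (hp_reflect v y) \<le> h y + h (hp_reflect v y)"
  shows "(\<integral>y. g y \<partial>m) \<le> (\<integral>y. h y \<partial>m :: real)"
proof -
  have "g y + g (hp_reflect v y) \<le> h y + h (hp_reflect v y)" for y
    using v_unit by (rule hp_reflect_pair_wlog[where P="\<lambda>y z. g y + g z \<le> h y + h z"])
      (auto simp: pairs add.commute)
  then have "(\<integral>y. g y + g (hp_reflect v y) \<partial>m) \<le> (\<integral>y. h y + h (hp_reflect v y) \<partial>m)"
    using g h integrable_hp_reflect[OF g] integrable_hp_reflect[OF h] by (intro integral_mono) auto
  moreover have "g \<in> borel_measurable borel" "h \<in> borel_measurable borel"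
    using g h by (simp_all flip: measurable_m_eq)
  ultimately show ?thesis
    using g h integrable_hp_reflect[OF g] integrable_hp_reflect[OF h] by (simp add: integral_hp_reflect)
qed

end

locale polarization_kernel = reflection_invariant_measure m v for m :: "(real^'n) measure" and v +
  fixes K :: "real \<Rightarrow> real"
  assumes K_measurable [measurable]: "K \<in> borel_measurable borel" and K_bounded: "bounded (range K)"
    and mono_K: "mono K"
begin

lemma K_bound: obtains B where "\<And>t. \<bar>K t\<bar> \<le> B"
  using K_bounded unfolding bounded_iff by (metis rangeI real_norm_def that)

lemma integrable_kernel:
  assumes g: "integrable m g"
  shows "integrable m (\<lambda>y. K (x \<bullet> y) * g y)"
proof -
  obtain B where B: "\<And>t. \<bar>K t\<bar> \<le> B" using K_bound by metis
  have "(\<lambda>y. K (x \<bullet> y)) \<in> borel_measurable m"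
    unfolding measurable_m_eq by measurable
  with g have "(\<lambda>y. K (x \<bullet> y) * g y) \<in> borel_measurable m"
    by measurable
  moreover have "\<bar>K (x \<bullet> y)\<bar> * \<bar>g y\<bar> \<le> \<bar>B\<bar> * \<bar>g y\<bar>" for y
    using B[of "x \<bullet> y"] by (intro mult_right_mono) auto
  then have "AE y in m. norm (K (x \<bullet> y) * g y) \<le> norm (B * g y)"
    by (simp add: abs_mult)
  moreover have "integrable m (\<lambda>y. B * g y)"
    using g by simp
  ultimately show ?thesis
    by (rule Bochner_Integration.integrable_bound[rotated])
qed

lemma Kop_hp_reflect:
  assumes "integrable m g"
  shows "Kop m K g (hp_reflect v x) = (\<integral>y. K (x \<bullet> y) * g (hp_reflect v y) \<partial>m)"
proof -
  have [measurable]: "g \<in> borel_measurable borel"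
    using borel_measurable_integrable[OF assms] by (simp add: measurable_m_eq)
  have "(\<integral>y. K (hp_reflect v x \<bullet> y) * g y \<partial>m)
      = (\<integral>y. K (hp_reflect v x \<bullet> hp_reflect v y) * g (hp_reflect v y) \<partial>m)"
    by (rule integral_hp_reflect[symmetric]) measurable
  then show ?thesis
    unfolding Kop_def by (simp add: hp_reflect_inner v_unit)
qed

lemma Kop_add_Kop_hp_reflect:
  assumes g: "integrable m g"
  shows "Kop m K g x + Kop m K g (hp_reflect v x) = (\<integral>y. K (x \<bullet> y) * (g y + g (hp_reflect v y)) \<partial>m)"
proof -
  have "Kop m K g x + Kop m K g (hp_reflect v x)
      = (\<integral>y. K (x \<bullet> y) * g y \<partial>m) + (\<integral>y. K (x \<bullet> y) * g (hp_reflect v y) \<partial>m)"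
    unfolding Kop_hp_reflect[OF g] by (simp add: Kop_def)
  also have "\<dots> = (\<integral>y. K (x \<bullet> y) * g y + K (x \<bullet> y) * g (hp_reflect v y) \<partial>m)"
    by (rule Bochner_Integration.integral_add[symmetric,
          OF integrable_kernel[OF g] integrable_kernel[OF integrable_hp_reflect[OF g]]])
  finally show ?thesis
    by (simp add: distrib_left)
qed

lemma integrable_polarization:
  assumes f: "integrable m f"
  shows "integrable m (polarization v f)"
proof (rule Bochner_Integration.integrable_bound)
  show "integrable m (\<lambda>y. \<bar>f y\<bar> + \<bar>f (hp_reflect v y)\<bar>)"
    using f integrable_hp_reflect[OF f] by simp
  show "polarization v f \<in> borel_measurable m"
    using borel_measurable_integrable[OF f] unfolding measurable_m_eq
    by (rule borel_measurable_polarization)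
  show "AE y in m. norm (polarization v f y) \<le> norm (\<bar>f y\<bar> + \<bar>f (hp_reflect v y)\<bar>)"
    by (intro AE_I2) (auto simp: polarization_def)
qed

lemma Kop_polarization_add_hp_reflect:
  assumes "integrable m f"
  shows "Kop m K (polarization v f) x + Kop m K (polarization v f) (hp_reflect v x)
       = Kop m K f x + Kop m K f (hp_reflect v x)"
  using assms
  by (simp add: Kop_add_Kop_hp_reflect integrable_polarization polarization_add_hp_reflect v_unit)

lemma K_inner_hp_reflect_le:
  assumes "0 \<le> x \<bullet> v" "0 \<le> y \<bullet> v"
  shows "K (x \<bullet> hp_reflect v y) \<le> K (x \<bullet> y)"
proof -
  have "x \<bullet> hp_reflect v y = x \<bullet> y - 2 * (y \<bullet> v) * (x \<bullet> v)"
    by (simp add: hp_reflect_def inner_diff_right)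
  with assms show ?thesis
    by (intro monoD[OF mono_K]) simp
qed

lemma Kop_le_Kop_polarization:
  assumes f: "integrable m f" and x: "0 \<le> x \<bullet> v"
  shows "Kop m K f x \<le> Kop m K (polarization v f) x"
  unfolding Kop_def
proof (rule integral_mono_reflection_pairs)
  fix y assume "0 \<le> y \<bullet> v"
  with x show "K (x \<bullet> y) * f y + K (x \<bullet> hp_reflect v y) * f (hp_reflect v y)
      \<le> K (x \<bullet> y) * polarization v f y + K (x \<bullet> hp_reflect v y) * polarization v f (hp_reflect v y)"
    by (simp add: polarization_nonneg_side polarization_hp_reflect_nonneg_side v_unit
        max_min_rearrangement K_inner_hp_reflect_le)
qed (simp_all add: f integrable_kernel integrable_polarization)

lemma Kop_hp_reflect_le_Kop_polarization:
  assumes f: "integrable m f" and x: "0 \<le> x \<bullet> v"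
  shows "Kop m K f (hp_reflect v x) \<le> Kop m K (polarization v f) x"
  unfolding Kop_hp_reflect[OF f] unfolding Kop_def
proof (rule integral_mono_reflection_pairs)
  fix y assume "0 \<le> y \<bullet> v"
  with x max_min_rearrangement[of "K (x \<bullet> hp_reflect v y)" "K (x \<bullet> y)" "f (hp_reflect v y)" "f y"]
  show "K (x \<bullet> y) * f (hp_reflect v y) + K (x \<bullet> hp_reflect v y) * f (hp_reflect v (hp_reflect v y))
      \<le> K (x \<bullet> y) * polarization v f y + K (x \<bullet> hp_reflect v y) * polarization v f (hp_reflect v y)"
    by (simp add: polarization_nonneg_side polarization_hp_reflect_nonneg_side v_unit
        hp_reflect_hp_reflect K_inner_hp_reflect_le max.commute min.commute)
qed (simp_all add: f integrable_kernel integrable_polarization integrable_hp_reflect[OF f])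

lemma borel_measurable_Kop:
  assumes "integrable m g"
  shows "Kop m K g \<in> borel_measurable m"
proof -
  have g: "g \<in> borel_measurable borel"
    using borel_measurable_integrable[OF assms] by (simp add: measurable_m_eq)
  have inner: "(\<lambda>p::(real^'n) \<times> (real^'n). fst p \<bullet> snd p) \<in> borel_measurable borel"
    by (intro borel_measurable_continuous_onI continuous_intros)
  have snd: "(snd :: (real^'n) \<times> (real^'n) \<Rightarrow> _) \<in> borel_measurable borel"
    by (intro borel_measurable_continuous_onI continuous_intros)
  have sets_prod: "sets (m \<Otimes>\<^sub>M m) = sets (borel :: ((real^'n) \<times> (real^'n)) measure)"
    unfolding borel_prod[symmetric] by (rule sets_pair_measure_cong[OF sets_eq sets_eq])
  have "(\<lambda>(x, y). K (x \<bullet> y) * g y) \<in> borel_measurable (m \<Otimes>\<^sub>M m)"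
    unfolding measurable_cong_sets[OF sets_prod refl] case_prod_beta'
    by (rule borel_measurable_times[OF measurable_compose[OF inner K_measurable] measurable_compose[OF snd g]])
  then show ?thesis
    unfolding Kop_def[abs_def] by (rule borel_measurable_lebesgue_integral)
qed

lemma integrable_comp_Kop:
  fixes Psi :: "real \<Rightarrow> real"
  assumes Psi: "continuous_on UNIV Psi" and g: "integrable m g"
  shows "integrable m (\<lambda>x. Psi (Kop m K g x))"
proof -
  obtain B where B: "\<And>t. \<bar>K t\<bar> \<le> B" using K_bound by metis
  define C where "C = (\<integral>y. B * \<bar>g y\<bar> \<partial>m)"
  have Kop_bound: "\<bar>Kop m K g x\<bar> \<le> C" for x
  proof -
    have "\<bar>Kop m K g x\<bar> \<le> (\<integral>y. \<bar>K (x \<bullet> y) * g y\<bar> \<partial>m)"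
      unfolding Kop_def by (rule integral_abs_bound)
    also have "\<dots> \<le> C"
      unfolding C_def
    proof (rule integral_mono)
      show "\<bar>K (x \<bullet> y) * g y\<bar> \<le> B * \<bar>g y\<bar>" for y
        using B[of "x \<bullet> y"] by (simp add: abs_mult mult_right_mono)
    qed (simp_all add: g integrable_kernel)
    finally show ?thesis .
  qed
  obtain M where M: "\<And>t. t \<in> {-C..C} \<Longrightarrow> \<bar>Psi t\<bar> \<le> M"
    using compact_imp_bounded[OF compact_continuous_image[OF continuous_on_subset[OF Psi] compact_Icc]]
    unfolding bounded_iff by (metis image_eqI real_norm_def subset_UNIV)
  have "\<bar>Psi (Kop m K g x)\<bar> \<le> M" for x
    using Kop_bound[of x] by (intro M) (simp add: abs_le_iff)
  moreover have "(\<lambda>x. Psi (Kop m K g x)) \<in> borel_measurable m"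
    using borel_measurable_continuous_onI[OF Psi] borel_measurable_Kop[OF g] by measurable
  ultimately show ?thesis
    by (intro integrable_const_bound[where B=M] AE_I2) simp_all
qed

lemma integral_convex_Kop_le_polarization:
  fixes Psi :: "real \<Rightarrow> real"
  assumes convex: "convex_on UNIV Psi" and Psi: "continuous_on UNIV Psi" and f: "integrable m f"
  shows "(\<integral>x. Psi (Kop m K f x) \<partial>m) \<le> (\<integral>x. Psi (Kop m K (polarization v f) x) \<partial>m)"
proof (rule integral_mono_reflection_pairs)
  fix x assume "0 \<le> x \<bullet> v"
  with f show "Psi (Kop m K f x) + Psi (Kop m K f (hp_reflect v x))
      \<le> Psi (Kop m K (polarization v f) x) + Psi (Kop m K (polarization v f) (hp_reflect v x))"
    by (intro convex_on_spread[OF convex] Kop_le_Kop_polarization Kop_hp_reflect_le_Kop_polarization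
        Kop_polarization_add_hp_reflect)
qed (simp_all add: f Psi integrable_comp_Kop integrable_polarization)

end

theorem theorem5:
  fixes R :: real and m :: "(real^'n) measure" and Psi K :: "real \<Rightarrow> real"
    and f :: "real^'n \<Rightarrow> real" and i :: 'n and v :: "real^'n"
  assumes "CARD('n) \<ge> 2"
    and "R > 0"
    and "uniform_sphere_measure R m"
    and "convex_on UNIV Psi"
    and "uniformly_continuous_on UNIV Psi"
    and "integrable m f"
    and "\<forall>x \<in> sphere 0 R. f x \<in> {0..1}"
    and "mono K"
    and "bounded (range K)"
    and "K \<in> borel_measurable borel"
    and "norm v = 1"
    and "v \<bullet> axis i R > 0"
  shows "(\<integral>x. Psi (Kop m K f x) \<partial>m) \<le> (\<integral>x. Psi (Kop m K (polarization v f) x) \<partial>m)"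
proof -
  have v_unit: "v \<bullet> v = 1"
    using \<open>norm v = 1\<close> by (simp add: norm_eq_1)
  have "sets m = sets borel" and "finite_measure m"
    using assms(3) unfolding uniform_sphere_measure_def by auto
  with assms(1,3,8-10) v_unit have "polarization_kernel m v K"
    by (intro polarization_kernel.intro reflection_invariant_measure.intro
        reflection_invariant_measure_axioms.intro polarization_kernel_axioms.intro
        uniform_sphere_measure_hp_reflect_invariant[of R m v])
  then interpret polarization_kernel m v K .
  show ?thesis
    using assms(4-6)
    by (intro integral_convex_Kop_le_polarization uniformly_continuous_imp_continuous)
qed

end
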